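(* Let $p$ be an odd prime and $b,c\in\mathbb Z$. For every integer $k$ with $-(p-2)\le k\le p-2$, $$(4c-b^2)\binom{p-2}{k}_{b,c}\equiv\begin{cases}\binom{p-1}{-1}_{b,c}+c\binom{p-1}{1}_{b,c}-b \pmod p & \text{if } k=0,\\[2mm] (k+1)\binom{p-1}{k-1}_{b,c}-(k-1)c\binom{p-1}{k+1}_{b,c}\pmod p & \text{if } 0<|k|\le p-2.\end{cases}$$
   Context: For $n\in\mathbb N$ and $b,c\in\mathbb Z$, the generalized trinomial coefficients $\binom{n}{k}_{b,c}$ ($k\in\mathbb Z$) are the integers defined by the Laurent polynomial identity $\left(x+b+\frac{c}{x}\right)^n=\sum_{k\in\mathbb Z}\binom{n}{k}_{b,c}x^k$; in particular $\binom nk_{b,c}=0$ when $|k|>n$. *)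

theory Defs
  imports "HOL-Computational_Algebra.Formal_Laurent_Series" "HOL-Number_Theory.Cong"
begin

definition gtrinom :: "nat \<Rightarrow> int \<Rightarrow> int \<Rightarrow> int \<Rightarrow> int" where
  "gtrinom n k b c = fls_nth ((fls_X + fls_const b + fls_const c * fls_X_inv) ^ n) k"

end

theory Submission
  imports Defs "HOL-Number_Theory.Residues"
begin

text \<open>Write \<open>T\<^sub>n(k)\<close> for the coefficient of \<open>x\<^sup>k\<close> in \<open>(x + b + c/x)\<^sup>n\<close>. Besides the
recurrence \<open>T\<^sub>n\<^sub>+\<^sub>1(k) = T\<^sub>n(k-1) + b T\<^sub>n(k) + c T\<^sub>n(k+1)\<close>, differentiating the generating
function gives \<open>k T\<^sub>n\<^sub>+\<^sub>1(k) = (n+1)(T\<^sub>n(k-1) - c T\<^sub>n(k+1))\<close>. Combining the two expresses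
\<open>(k+1) T\<^sub>p\<^sub>-\<^sub>1(k-1) - (k-1) c T\<^sub>p\<^sub>-\<^sub>1(k+1)\<close> as \<open>T\<^sub>p(k) + (4c - b\<^sup>2) T\<^sub>p\<^sub>-\<^sub>2(k)\<close> plus a multiple
of \<open>p\<close>. By the derivative identity \<open>p\<close> divides \<open>T\<^sub>p(k)\<close> for \<open>0 < |k| < p\<close>, and summing all
coefficients (\<open>x = 1\<close>) together with Fermat's little theorem gives \<open>T\<^sub>p(0) \<equiv> b (mod p)\<close>.
The argument never uses that \<open>p\<close> is odd.\<close>

lemma gtrinom_0 [simp]: "gtrinom 0 k b c = (if k = 0 then 1 else 0)"
  by (simp add: gtrinom_def)

lemma gtrinom_Suc [simp]:
  "gtrinom (Suc n) k b c = gtrinom n (k - 1) b c + b * gtrinom n k b c + c * gtrinom n (k + 1) b c"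
proof -
  define G where "G = (fls_X + fls_const b + fls_const c * fls_X_inv) ^ n"
  have "(fls_X + fls_const b + fls_const c * fls_X_inv) ^ Suc n
        = fls_X * G + fls_const b * G + fls_const c * (fls_X_inv * G)"
    by (simp add: G_def algebra_simps)
  then show ?thesis
    by (simp add: gtrinom_def G_def fls_X_times_conv_shift fls_X_inv_times_conv_shift)
qed

lemma gtrinom_eq_0: "int n < \<bar>k\<bar> \<Longrightarrow> gtrinom n k b c = 0"
  by (induction n arbitrary: k) auto

lemma gtrinom_top: "gtrinom n (int n) b c = 1"
  by (induction n) (auto simp: gtrinom_eq_0)

lemma gtrinom_bottom: "gtrinom n (- int n) b c = c ^ n"
  by (induction n) (auto simp: gtrinom_eq_0)

text \<open>Coefficient of \<open>x\<^sup>k\<close> in \<open>x (d/dx) (x + b + c/x)\<^sup>n\<^sup>+\<^sup>1 = (n+1) (x - c/x) (x + b + c/x)\<^sup>n\<close>.\<close>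
lemma gtrinom_Suc_index_mult:
  "k * gtrinom (Suc n) k b c = int (Suc n) * (gtrinom n (k - 1) b c - c * gtrinom n (k + 1) b c)"
proof (induction n arbitrary: k)
  case 0
  then show ?case by (cases "k = 1"; cases "k = -1"; cases "k = 0") simp_all
next
  case (Suc n)
  let ?T = "\<lambda>m j. gtrinom m j b c"
  have below: "(k - 1) * ?T (Suc n) (k - 1) = int (Suc n) * (?T n (k - 2) - c * ?T n k)"
    using Suc[of "k - 1"] by (simp del: gtrinom_Suc add: algebra_simps)
  have above: "(k + 1) * ?T (Suc n) (k + 1) = int (Suc n) * (?T n k - c * ?T n (k + 2))"
    using Suc[of "k + 1"] by (simp del: gtrinom_Suc add: algebra_simps)
  have "k * ?T (Suc (Suc n)) k
      = ((k - 1) * ?T (Suc n) (k - 1) + ?T (Suc n) (k - 1)) + b * (k * ?T (Suc n) k)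
        + c * ((k + 1) * ?T (Suc n) (k + 1) - ?T (Suc n) (k + 1))"
    by (simp only: gtrinom_Suc[of "Suc n"]) (simp del: gtrinom_Suc add: algebra_simps)
  also have "\<dots> = int (Suc (Suc n)) * (?T (Suc n) (k - 1) - c * ?T (Suc n) (k + 1))"
    unfolding below above Suc[of k] by (simp add: algebra_simps)
  finally show ?case .
qed

lemma gtrinom_contiguous:
  "(k + 1) * gtrinom (Suc n) (k - 1) b c - (k - 1) * c * gtrinom (Suc n) (k + 1) b c
     = int (n + 2) * (gtrinom n (k - 2) b c - 2 * c * gtrinom n k b c + c\<^sup>2 * gtrinom n (k + 2) b c)
       + gtrinom (Suc (Suc n)) k b c + (4 * c - b\<^sup>2) * gtrinom n k b c"
proof -
  let ?T = "\<lambda>m j. gtrinom m j b c"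
  have below: "(k - 1) * ?T (Suc n) (k - 1) = int (Suc n) * (?T n (k - 2) - c * ?T n k)"
    using gtrinom_Suc_index_mult[of "k - 1" n b c] by (simp del: gtrinom_Suc add: algebra_simps)
  have above: "(k + 1) * ?T (Suc n) (k + 1) = int (Suc n) * (?T n k - c * ?T n (k + 2))"
    using gtrinom_Suc_index_mult[of "k + 1" n b c] by (simp del: gtrinom_Suc add: algebra_simps)
  have "(k + 1) * ?T (Suc n) (k - 1) - (k - 1) * c * ?T (Suc n) (k + 1)
      = ((k - 1) * ?T (Suc n) (k - 1) + 2 * ?T (Suc n) (k - 1))
        - c * ((k + 1) * ?T (Suc n) (k + 1) - 2 * ?T (Suc n) (k + 1))"
    by (simp del: gtrinom_Suc add: algebra_simps)
  also have "\<dots> = int (n + 2) * (?T n (k - 2) - 2 * c * ?T n k + c\<^sup>2 * ?T n (k + 2))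
       + ?T (Suc (Suc n)) k + (4 * c - b\<^sup>2) * ?T n k"
    unfolding below above by (simp add: algebra_simps power2_eq_square)
  finally show ?thesis .
qed

lemma sum_gtrinom_shift:
  assumes "lo + d \<le> - int n" and "int n \<le> hi + d"
  shows "(\<Sum>k\<in>{lo..hi}. gtrinom n (k + d) b c) = (\<Sum>k\<in>{- int n..int n}. gtrinom n k b c)"
proof -
  have "(\<Sum>k\<in>{lo..hi}. gtrinom n (k + d) b c) = (\<Sum>k\<in>{lo + d..hi + d}. gtrinom n k b c)"
    by (rule sum.reindex_bij_witness[of _ "\<lambda>k. k - d" "\<lambda>k. k + d"]) auto
  also have "\<dots> = (\<Sum>k\<in>{- int n..int n}. gtrinom n k b c)"
    using assms by (intro sum.mono_neutral_right) (auto intro!: gtrinom_eq_0)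
  finally show ?thesis .
qed

lemma sum_gtrinom: "(\<Sum>k\<in>{- int n..int n}. gtrinom n k b c) = (1 + b + c) ^ n"
proof (induction n)
  case 0
  then show ?case by simp
next
  case (Suc n)
  let ?I = "{- int (Suc n)..int (Suc n)}"
  have "(\<Sum>k\<in>?I. gtrinom (Suc n) k b c)
      = (\<Sum>k\<in>?I. gtrinom n (k + (- 1)) b c) + b * (\<Sum>k\<in>?I. gtrinom n (k + 0) b c)
        + c * (\<Sum>k\<in>?I. gtrinom n (k + 1) b c)"
    by (simp add: sum.distrib sum_distrib_left)
  also have "\<dots> = (1 + b + c) ^ Suc n"
    by (simp only: sum_gtrinom_shift Suc) (simp_all add: algebra_simps)
  finally show ?case .
qed

lemma fermat_little_int:
  fixes a :: int
  assumes "prime p"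
  shows "[a ^ p = a] (mod int p)"
proof -
  have p_pos: "p > 0"
    using assms prime_gt_0_nat by blast
  define m where "m = nat (a mod int p)"
  have a_cong: "[a = int m] (mod int p)"
    using p_pos by (simp add: m_def cong_def)
  have "[m ^ p = m] (mod p)"
  proof (cases "p dvd m")
    case True
    then have "p dvd m ^ p"
      using p_pos by (metis dvd_power dvd_trans)
    with True show ?thesis
      by (simp add: cong_def dvd_eq_mod_eq_0)
  next
    case False
    then have "[m * m ^ (p - 1) = m * 1] (mod p)"
      using assms fermat_theorem cong_scalar_left by blast
    then show ?thesis
      using p_pos by (simp flip: power_Suc)
  qed
  then have "[int m ^ p = int m] (mod int p)"
    by (metis cong_int_iff of_nat_power)
  then show ?thesis
    using a_cong by (meson cong_pow cong_sym cong_trans)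
qed

lemma prime_dvd_gtrinom:
  assumes "prime p" and "0 < \<bar>k\<bar>" and "\<bar>k\<bar> < int p"
  shows "int p dvd gtrinom p k b c"
proof -
  obtain n where p_Suc: "p = Suc n"
    using assms(1) prime_gt_0_nat gr0_conv_Suc by blast
  have "int p dvd k * gtrinom p k b c"
    using gtrinom_Suc_index_mult[of k n b c] p_Suc by simp
  moreover have "\<not> int p dvd k"
    using assms(2,3) zdvd_imp_le[of "int p" "\<bar>k\<bar>"] by auto
  ultimately show ?thesis
    using assms(1) prime_dvd_mult_iff[of "int p"] by auto
qed

lemma gtrinom_prime_middle_cong:
  assumes "prime p"
  shows "[gtrinom p 0 b c = b] (mod int p)"
proof -
  let ?T = "\<lambda>k. gtrinom p k b c"
  let ?ends = "{- int p, 0, int p}"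
  have p_pos: "int p > 0"
    using assms prime_gt_0_nat by simp
  have "(1 + b + c) ^ p = sum ?T ({- int p..int p} - ?ends) + sum ?T ?ends"
    unfolding sum_gtrinom[of p b c, symmetric] using p_pos by (intro sum.subset_diff) auto
  also have "sum ?T ?ends = c ^ p + ?T 0 + 1"
    using p_pos by (simp add: gtrinom_top gtrinom_bottom)
  finally have "?T 0 - b = ((1 + b + c) ^ p - (1 + b + c)) - (c ^ p - c)
                           - sum ?T ({- int p..int p} - ?ends)"
    by simp
  moreover have "int p dvd sum ?T ({- int p..int p} - ?ends)"
    by (intro dvd_sum prime_dvd_gtrinom[OF assms]) auto
  ultimately show ?thesis
    using fermat_little_int[OF assms, of "1 + b + c"] fermat_little_int[OF assms, of c]
    unfolding cong_iff_dvd_diff by (metis dvd_diff)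
qed

lemma gtrinom_contiguous_cong:
  "[(k + 1) * gtrinom (Suc n) (k - 1) b c - (k - 1) * c * gtrinom (Suc n) (k + 1) b c
      = gtrinom (n + 2) k b c + (4 * c - b\<^sup>2) * gtrinom n k b c] (mod int (n + 2))"
  unfolding gtrinom_contiguous cong_iff_dvd_diff by simp

theorem lemma2p1:
  fixes p :: nat and b c k :: int
  assumes "prime p" and "odd p"
    and "- (int p - 2) \<le> k" and "k \<le> int p - 2"
  shows "(k = 0 \<longrightarrow>
           [(4 * c - b ^ 2) * gtrinom (p - 2) k b c
              = gtrinom (p - 1) (-1) b c + c * gtrinom (p - 1) 1 b c - b] (mod int p))
       \<and> (0 < \<bar>k\<bar> \<and> \<bar>k\<bar> \<le> int p - 2 \<longrightarrow>
           [(4 * c - b ^ 2) * gtrinom (p - 2) k b c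
              = (k + 1) * gtrinom (p - 1) (k - 1) b c - (k - 1) * c * gtrinom (p - 1) (k + 1) b c] (mod int p))"
proof -
  let ?L = "(k + 1) * gtrinom (p - 1) (k - 1) b c - (k - 1) * c * gtrinom (p - 1) (k + 1) b c"
  let ?D = "(4 * c - b ^ 2) * gtrinom (p - 2) k b c"
  obtain n where p: "p = n + 2"
    using assms(1) prime_ge_2_nat le_Suc_ex by (metis add.commute)
  have contiguous: "[?L = gtrinom p k b c + ?D] (mod int p)"
    using gtrinom_contiguous_cong[of k n b c] by (simp add: p)
  have D_cong: "[?D = ?L - r] (mod int p)" if "[gtrinom p k b c = r] (mod int p)" for r
  proof -
    have "int p dvd (?L - (gtrinom p k b c + ?D)) + (gtrinom p k b c - r)"
      using contiguous that unfolding cong_iff_dvd_diff by (rule dvd_add)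
    also have "(?L - (gtrinom p k b c + ?D)) + (gtrinom p k b c - r) = (?L - r) - ?D"
      by simp
    finally show ?thesis
      by (simp add: cong_iff_dvd_diff dvd_diff_commute)
  qed
  show ?thesis
  proof (intro conjI impI)
    assume "k = 0"
    then show "[?D = gtrinom (p - 1) (-1) b c + c * gtrinom (p - 1) 1 b c - b] (mod int p)"
      using D_cong gtrinom_prime_middle_cong[OF assms(1)] by simp
  next
    assume "0 < \<bar>k\<bar> \<and> \<bar>k\<bar> \<le> int p - 2"
    then have "[gtrinom p k b c = 0] (mod int p)"
      by (simp add: cong_0_iff prime_dvd_gtrinom[OF assms(1)])
    then show "[?D = ?L] (mod int p)"
      using D_cong by fastforce
  qed
qed
end
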